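(* Let $d\ge4$ be even, $\mathcal{C}\in(\mathbb{R}^2)^{\otimes d}$ the symmetric tensor of $x^d-3y^d$, and $\mathcal{M}=\{x^{d-2}y,x^{d-3}y^2,\dots,xy^{d-2}\}\subset(\mathbb{R}^2)^{\otimes(d-1)}$. Let $E=\{1,\dots,n\}$, $\mathcal{E}=\{n+1,\dots,2n\}$ and let $\mathcal{W}\subset(\mathbb{R}^{E\cup\mathcal{E}})^{\otimes(d-1)}$ be a finite set of tensors such that: (3) $\operatorname{Span}\mathcal{W}$ contains the $n$ clone of every tensor in $\mathcal{M}$; (4e) $\mathbb{I}(E,d)$ is the only decomposable tensor in $\mathbb{I}(E,d)\bmod\mathcal{W}_E$; (4$\epsilon$) $\mathbb{I}(\mathcal{E},d)$ is the only decomposable tensor in $\mathbb{I}(\mathcal{E},d)\bmod\mathcal{W}_{\mathcal{E}}$. Then $\operatorname{minrk}(\mathcal{C}_c\bmod\mathcal{W})<\operatorname{minsrk}(\mathcal{C}_c\bmod\mathcal{W})$, where $\mathcal{C}_c$ is the $n$ clone of $\mathcal{C}$.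
   Context: All tensors are real. Symmetric tensors correspond to forms via $\mathcal{T}\leftrightarrow\sum_k\mathcal{T}(k_1|\dots|k_m)x_{k_1}\cdots x_{k_m}$ (with $x_1=x,x_2=y$ for binary forms). Clone: for $\mathcal{U}\in(\mathbb{R}^2)^{\otimes m}$, its $n$ clone $\mathcal{U}_c\in(\mathbb{R}^{E\cup\mathcal{E}})^{\otimes m}$ has entries $\mathcal{U}_c(k_1|\dots|k_m)=\mathcal{U}(h_1|\dots|h_m)$, where $h_i=1$ if $k_i\in E$ and $h_i=2$ if $k_i\in\mathcal{E}$. For a tensor (or set of tensors) on index set $E\cup\mathcal{E}$, the subscript $E$ (resp. $\mathcal{E}$) denotes restriction of each index to $E$ (resp. $\mathcal{E}$). $\mathbb{I}(E,d)\in(\mathbb{R}^E)^{\otimes d}$ is the all-ones tensor, similarly $\mathbb{I}(\mathcal{E},d)$. For $\mathcal{C}\in(\mathbb{R}^I)^{\otimes d}$ and finite $\mathcal{W}\subset(\mathbb{R}^I)^{\otimes(d-1)}$, $\mathcal{C}\bmod\mathcal{W}$ is the set of tensors with entries $\mathcal{C}(k_1|\dots|k_d)+\sum_{j=1}^dM_j^{(k_j)}(k_1|\dots|\widehat{k_j}|\dots|k_d)$ with arbitrary $M_j^{(k_j)}\in\operatorname{Span}\mathcal{W}$ chosen independently for each $j$ and each $k_j\in I$. $\operatorname{minrk}\mathcal{A}$ is the minimal rank (number of decomposable summands $v_1\otimes\cdots\otimes v_d$) of a tensor in $\mathcal{A}$; $\operatorname{minsrk}\mathcal{A}$ is the minimal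 symmetric rank (number of summands $\lambda v^{\otimes d}$) of a symmetric tensor in $\mathcal{A}$. *)

theory Defs
  imports "HOL-Analysis.Analysis" "HOL-Library.Multiset"
begin

text \<open>A tensor of order m on an index set I is modelled as a function
  nat list \<Rightarrow> real, of which only the values on tdom I m matter
  (lists of length m with entries in I).\<close>

type_synonym tensor = "nat list \<Rightarrow> real"

definition tdom :: "nat set \<Rightarrow> nat \<Rightarrow> nat list set" where
  "tdom I m = {ks. length ks = m \<and> set ks \<subseteq> I}"

definition tspan :: "nat set \<Rightarrow> nat \<Rightarrow> tensor set \<Rightarrow> tensor set" where
  "tspan I m W = {f. \<exists>c. \<forall>ks\<in>tdom I m. f ks = (\<Sum>w\<in>W. c w * w ks)}"

definition decomposable :: "nat set \<Rightarrow> nat \<Rightarrow> tensor \<Rightarrow> bool" where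
  "decomposable I d T \<longleftrightarrow>
     (\<exists>v :: nat \<Rightarrow> nat \<Rightarrow> real. \<forall>ks\<in>tdom I d. T ks = (\<Prod>i<d. v i (ks ! i)))"

definition symmetric_tensor :: "nat set \<Rightarrow> nat \<Rightarrow> tensor \<Rightarrow> bool" where
  "symmetric_tensor I d T \<longleftrightarrow>
     (\<forall>ks\<in>tdom I d. \<forall>ks'\<in>tdom I d. mset ks = mset ks' \<longrightarrow> T ks = T ks')"

definition rank_le :: "nat set \<Rightarrow> nat \<Rightarrow> tensor \<Rightarrow> nat \<Rightarrow> bool" where
  "rank_le I d T r \<longleftrightarrow>
     (\<exists>v :: nat \<Rightarrow> nat \<Rightarrow> nat \<Rightarrow> real. \<forall>ks\<in>tdom I d.
        T ks = (\<Sum>l<r. \<Prod>i<d. v l i (ks ! i)))"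

definition srank_le :: "nat set \<Rightarrow> nat \<Rightarrow> tensor \<Rightarrow> nat \<Rightarrow> bool" where
  "srank_le I d T r \<longleftrightarrow>
     (\<exists>(lam :: nat \<Rightarrow> real) (u :: nat \<Rightarrow> nat \<Rightarrow> real). \<forall>ks\<in>tdom I d.
        T ks = (\<Sum>l<r. lam l * (\<Prod>i<d. u l (ks ! i))))"

definition minrk :: "nat set \<Rightarrow> nat \<Rightarrow> tensor set \<Rightarrow> nat" where
  "minrk I d A = (LEAST r. \<exists>T\<in>A. rank_le I d T r)"

definition minsrk :: "nat set \<Rightarrow> nat \<Rightarrow> tensor set \<Rightarrow> nat" where
  "minsrk I d A = (LEAST r. \<exists>T\<in>A. symmetric_tensor I d T \<and> srank_le I d T r)"

definition tmod :: "nat set \<Rightarrow> nat \<Rightarrow> tensor \<Rightarrow> tensor set \<Rightarrow> tensor set" where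
  "tmod I d C W = {T. \<exists>M :: nat \<Rightarrow> nat \<Rightarrow> tensor.
      (\<forall>j<d. \<forall>k\<in>I. M j k \<in> tspan I (d - 1) W) \<and>
      (\<forall>ks\<in>tdom I d. T ks = C ks +
          (\<Sum>j<d. M j (ks ! j) (take j ks @ drop (Suc j) ks)))}"

definition only_decomposable :: "nat set \<Rightarrow> nat \<Rightarrow> tensor \<Rightarrow> tensor set \<Rightarrow> bool" where
  "only_decomposable I d T A \<longleftrightarrow>
     decomposable I d T \<and> (\<exists>T'\<in>A. \<forall>ks\<in>tdom I d. T' ks = T ks) \<and>
     (\<forall>T'\<in>A. decomposable I d T' \<longrightarrow> (\<forall>ks\<in>tdom I d. T' ks = T ks))"

definition ones :: tensor where "ones = (\<lambda>_. 1)"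

text \<open>Symmetric tensor in (R^2)^{\<otimes>m} (indices 1 = x, 2 = y) of the monomial
  x^(m-j) y^j: entry 1/(m choose j) if exactly j indices equal 2.\<close>
definition bin_monomial :: "nat \<Rightarrow> nat \<Rightarrow> tensor" where
  "bin_monomial m j = (\<lambda>ks. if length (filter (\<lambda>k. k = 2) ks) = j
                            then 1 / real (m choose j) else 0)"

text \<open>n clone: indices in E = {1..n} map to 1, others (in {n+1..2n}) to 2.\<close>
definition clone :: "nat \<Rightarrow> tensor \<Rightarrow> tensor" where
  "clone n U = (\<lambda>ks. U (map (\<lambda>k. if k \<in> {1..n} then 1 else 2) ks))"

end

theory Submission
  imports Defs
begin

text \<open>Under the clone an index outside E plays the role of the variable y, so all tensors
  involved depend on an index tuple only through its y-degree. With v = 1 on E and v = a on \<E>,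
  the rank-one tensor v \<otimes> 1 \<otimes> ... \<otimes> 1 agrees with the clone of x^d + a y^d except on
  tuples of mixed type, and there the difference, a function of the y-degree and of the first
  index, is a sum over the slots of combinations of the cloned monomials x^(d-1-c) y^c with
  0 < c < d - 1. Hence minrk \<le> 1. Conversely, a tensor c u \<otimes> ... \<otimes> u in the class restricts
  on E to a decomposable element of I(E,d) mod W_E and, divided by a, on \<E> to one of
  I(\<E>,d) mod W_\<E>, so by (4e) and (4\<epsilon>) its diagonal entries c u(k)^d are 1 on E and a on \<E>.
  For even d they all have the sign of c, which contradicts a < 0. Hence minsrk \<ge> 2.\<close>

lemma length_filter_remove_nth:
  assumes "j < length ks"
  shows "length (filter P ks)
           = length (filter P (take j ks @ drop (Suc j) ks)) + (if P (ks ! j) then 1 else 0)"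
proof -
  have "ks = take j ks @ ks ! j # drop (Suc j) ks"
    using assms by (simp add: id_take_nth_drop)
  then have "length (filter P ks) = length (filter P (take j ks @ ks ! j # drop (Suc j) ks))"
    by (rule arg_cong)
  then show ?thesis by simp
qed

lemma sum_nth_if_length_filter:
  "(\<Sum>j<length ks. if P (ks ! j) then x else y)
     = of_nat (length (filter P ks)) * x
       + of_nat (length ks - length (filter P ks)) * (y :: 'a :: comm_semiring_1)"
proof (induction ks)
  case Nil then show ?case by simp
next
  case (Cons k ks)
  have "length (filter P ks) \<le> length ks" by simp
  then show ?case
    using Cons by (simp add: sum.lessThan_Suc_shift del: sum.lessThan_Suc)
      (auto simp: algebra_simps Suc_diff_le)
qed

lemma prod_nth_indicator:
  "(\<Prod>i<length ks. if P (ks ! i) then 1 else 0 :: 'a :: comm_semiring_1)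
     = (if length (filter P ks) = length ks then 1 else 0)"
proof (induction ks)
  case (Cons k ks)
  have "length (filter P ks) \<noteq> Suc (length ks)"
    using length_filter_le[of P ks] by linarith
  with Cons show ?case
    by (simp add: prod.lessThan_Suc_shift del: prod.lessThan_Suc)
qed simp

lemma tspan_sum:
  assumes "finite A" and "\<And>i. i \<in> A \<Longrightarrow> f i \<in> tspan I m W"
  shows "(\<lambda>ks. \<Sum>i\<in>A. x i * f i ks) \<in> tspan I m W"
proof -
  have "\<forall>i\<in>A. \<exists>c. \<forall>ks\<in>tdom I m. f i ks = (\<Sum>w\<in>W. c w * w ks)"
    using assms(2) by (simp add: tspan_def)
  then obtain c where c: "\<forall>i\<in>A. \<forall>ks\<in>tdom I m. f i ks = (\<Sum>w\<in>W. c i w * w ks)"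
    by metis
  have "(\<Sum>i\<in>A. x i * f i ks) = (\<Sum>w\<in>W. (\<Sum>i\<in>A. x i * c i w) * w ks)" if "ks \<in> tdom I m" for ks
  proof -
    have "(\<Sum>i\<in>A. x i * f i ks) = (\<Sum>i\<in>A. x i * (\<Sum>w\<in>W. c i w * w ks))"
      using that c by (intro sum.cong) auto
    also have "\<dots> = (\<Sum>w\<in>W. (\<Sum>i\<in>A. x i * c i w) * w ks)"
      by (simp add: sum_distrib_left sum_distrib_right sum.swap[of _ W] mult.assoc)
    finally show ?thesis .
  qed
  then show ?thesis
    unfolding tspan_def by (intro CollectI exI[of _ "\<lambda>w. \<Sum>i\<in>A. x i * c i w"]) blast
qed

lemma tspan_divide: "f \<in> tspan I m W \<Longrightarrow> (\<lambda>ks. f ks / x) \<in> tspan I m W"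
proof -
  assume "f \<in> tspan I m W"
  then obtain c where "\<forall>ks\<in>tdom I m. f ks = (\<Sum>w\<in>W. c w * w ks)"
    unfolding tspan_def by blast
  then show ?thesis
    unfolding tspan_def by (intro CollectI exI[of _ "\<lambda>w. c w / x"]) (simp add: sum_divide_distrib)
qed

lemma tspan_subset: "J \<subseteq> I \<Longrightarrow> f \<in> tspan I m W \<Longrightarrow> f \<in> tspan J m W"
  unfolding tspan_def tdom_def by blast

lemma tmod_self: "C \<in> tmod I d C W"
  unfolding tmod_def tspan_def
  by (intro CollectI exI[of _ "\<lambda>_ _ _. 0"]) (auto intro: exI[of _ "\<lambda>_. 0"])

lemma tmod_restrict:
  assumes T: "T \<in> tmod I d C W" and "J \<subseteq> I" and C: "\<forall>ks\<in>tdom J d. C ks = C' ks"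
  shows "T \<in> tmod J d C' W"
proof -
  obtain M where M: "\<forall>j<d. \<forall>k\<in>I. M j k \<in> tspan I (d - 1) W"
    and T_eq: "\<forall>ks\<in>tdom I d. T ks = C ks + (\<Sum>j<d. M j (ks ! j) (take j ks @ drop (Suc j) ks))"
    using T unfolding tmod_def by blast
  have "tdom J d \<subseteq> tdom I d"
    using \<open>J \<subseteq> I\<close> by (auto simp: tdom_def)
  then show ?thesis
    unfolding tmod_def using M T_eq C \<open>J \<subseteq> I\<close> tspan_subset
    by (intro CollectI exI[of _ M] conjI) (metis subsetD)+
qed

lemma tmod_divide:
  assumes "T \<in> tmod I d C W"
  shows "(\<lambda>ks. T ks / x) \<in> tmod I d (\<lambda>ks. C ks / x) W"
proof -
  obtain M where M: "\<forall>j<d. \<forall>k\<in>I. M j k \<in> tspan I (d - 1) W"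
    and T_eq: "\<forall>ks\<in>tdom I d. T ks = C ks + (\<Sum>j<d. M j (ks ! j) (take j ks @ drop (Suc j) ks))"
    using assms unfolding tmod_def by blast
  show ?thesis
    unfolding tmod_def
    by (intro CollectI exI[of _ "\<lambda>j k rest. M j k rest / x"] conjI)
      (use M T_eq tspan_divide in \<open>auto simp: add_divide_distrib sum_divide_distrib\<close>)
qed

lemma rank_le_first_slot: "0 < d \<Longrightarrow> rank_le I d (\<lambda>ks. f (ks ! 0)) 1"
  unfolding rank_le_def by (intro exI[of _ "\<lambda>_ i k. if i = 0 then f k else 1"]) simp

lemma decomposable_if_scaled_power:
  assumes "0 < d" and "\<forall>ks\<in>tdom I d. T ks = c * (\<Prod>i<d. u (ks ! i))"
  shows "decomposable I d T"
  unfolding decomposable_def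
  by (intro exI[of _ "\<lambda>i k. (if i = 0 then c else 1) * u k"]) (simp add: assms prod.distrib)

lemma srank_le_1_imp_scaled_power:
  assumes "srank_le I d T r" and "r \<le> 1"
  obtains c u where "\<forall>ks\<in>tdom I d. T ks = c * (\<Prod>i<d. u (ks ! i))"
proof -
  obtain lam u where T: "\<forall>ks\<in>tdom I d. T ks = (\<Sum>l<r. lam l * (\<Prod>i<d. u l (ks ! i)))"
    using assms(1) unfolding srank_le_def by blast
  from \<open>r \<le> 1\<close> consider "r = 0" | "r = 1" by linarith
  then show ?thesis
    by cases (use T that[of 0] that[of "lam 0" "u 0"] in auto)
qed

lemma even_power_sign:
  fixes c x y :: real
  assumes "even d" and "0 < c * x ^ d"
  shows "0 \<le> c * y ^ d"
proof -
  have "0 \<le> x ^ d" "0 \<le> y ^ d"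
    using \<open>even d\<close> by (simp_all add: zero_le_even_power)
  then have "0 < c"
    using assms(2) by (metis mult_nonpos_nonneg not_less)
  with \<open>0 \<le> y ^ d\<close> show ?thesis by simp
qed

lemma minrk_le: "T \<in> A \<Longrightarrow> rank_le I d T r \<Longrightarrow> minrk I d A \<le> r"
  unfolding minrk_def by (blast intro: Least_le)

lemma le_minsrk:
  assumes "T\<^sub>0 \<in> A" and "symmetric_tensor I d T\<^sub>0" and "srank_le I d T\<^sub>0 r\<^sub>0"
    and "\<And>T r. T \<in> A \<Longrightarrow> symmetric_tensor I d T \<Longrightarrow> srank_le I d T r \<Longrightarrow> m \<le> r"
  shows "m \<le> minsrk I d A"
  unfolding minsrk_def by (rule LeastI2_ex) (use assms in blast)+

definition ydeg :: "nat \<Rightarrow> nat list \<Rightarrow> nat" where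
  "ydeg n ks = length (filter (\<lambda>k. k \<notin> {1..n}) ks)"

lemma ydeg_eq_0: "set ks \<subseteq> {1..n} \<Longrightarrow> ydeg n ks = 0"
  unfolding ydeg_def by (auto simp: filter_empty_conv)

lemma ydeg_eq_length: "set ks \<inter> {1..n} = {} \<Longrightarrow> ydeg n ks = length ks"
  unfolding ydeg_def by (subst filter_True) auto

lemma clone_bin_monomial:
  "clone n (bin_monomial m j) ks = (if ydeg n ks = j then 1 / real (m choose j) else 0)"
proof -
  have "length (filter (\<lambda>k. k = 2) (map (\<lambda>k. if k \<in> {1..n} then 1 else 2 :: nat) ks)) = ydeg n ks"
    unfolding ydeg_def by (induction ks) auto
  then show ?thesis unfolding clone_def bin_monomial_def by simp
qed

lemma clone_binary_form:
  "clone n (\<lambda>ks. bin_monomial d 0 ks + a * bin_monomial d d ks)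
     = (\<lambda>ks. (if ydeg n ks = 0 then 1 else 0) + a * (if ydeg n ks = d then 1 else 0))"
  using clone_bin_monomial[of n d] by (simp add: clone_def fun_eq_iff)

lemma ydeg_function_in_tspan:
  assumes W: "\<forall>j\<in>{1..m-1}. clone n (bin_monomial m j) \<in> tspan I m W"
    and supp: "\<And>c. c \<notin> {1..m-1} \<Longrightarrow> \<phi> c = 0"
  shows "(\<lambda>ks. \<phi> (ydeg n ks)) \<in> tspan I m W"
proof -
  have "\<phi> (ydeg n ks)
      = (\<Sum>j\<in>{1..m-1}. (\<phi> j * real (m choose j)) * clone n (bin_monomial m j) ks)" for ks
  proof -
    have "(\<Sum>j\<in>{1..m-1}. (\<phi> j * real (m choose j)) * clone n (bin_monomial m j) ks)
        = (\<Sum>j\<in>{1..m-1}. if ydeg n ks = j then \<phi> j else 0)"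
      by (intro sum.cong) (auto simp: clone_bin_monomial)
    with supp show ?thesis
      by (auto simp: sum.delta')
  qed
  then have "(\<lambda>ks. \<phi> (ydeg n ks))
      = (\<lambda>ks. \<Sum>j\<in>{1..m-1}. (\<phi> j * real (m choose j)) * clone n (bin_monomial m j) ks)"
    by (rule ext)
  also have "\<dots> \<in> tspan I m W"
    using W by (intro tspan_sum) auto
  finally show ?thesis .
qed

lemma clone_binary_form_inner:
  "0 < d \<Longrightarrow> ks \<in> tdom {1..n} d
     \<Longrightarrow> clone n (\<lambda>ks. bin_monomial d 0 ks + a * bin_monomial d d ks) ks = 1"
  by (simp add: clone_binary_form ydeg_eq_0 tdom_def)

lemma clone_binary_form_outer:
  assumes "0 < d" and "ks \<in> tdom J d" and "J \<inter> {1..n} = {}"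
  shows "clone n (\<lambda>ks. bin_monomial d 0 ks + a * bin_monomial d d ks) ks = a"
proof -
  have "set ks \<inter> {1..n} = {}" and "length ks = d"
    using assms(2,3) by (auto simp: tdom_def)
  with \<open>0 < d\<close> show ?thesis
    by (simp add: clone_binary_form ydeg_eq_length)
qed

text \<open>The coefficients of the correction term M j k in slot j, as functions of whether k lies
  outside E and of the y-degree c of the remaining indices; first_slot_coeff is added in slot 0
  only. Both vanish unless 0 < c < d - 1, so each M j k lies in the span of W.\<close>

definition slot_coeff :: "nat \<Rightarrow> real \<Rightarrow> bool \<Rightarrow> nat \<Rightarrow> real" where
  "slot_coeff d a y c =
     (if y then if c \<in> {1..d-2} then 1 / real (c + 1) else 0
      else if c = 1 then a / real (d - 1) else 0)"

definition first_slot_coeff :: "nat \<Rightarrow> real \<Rightarrow> bool \<Rightarrow> nat \<Rightarrow> real" where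
  "first_slot_coeff d a y c =
     (if y then if c \<in> {1..d-2} then a - 1 else 0
      else if c = 1 then 1 - a else 0)"

lemma slot_coeff_balance:
  assumes "3 \<le> d" and "N \<le> d"
  shows "real N * slot_coeff d a True (N - 1) + real (d - N) * slot_coeff d a False N
           = (if 0 < N \<and> N < d then 1 else 0) + (if N = 1 then a - 1 else 0)"
proof -
  consider "N = 0" | "N = 1" | "2 \<le> N" "N < d" | "N = d"
    using assms by linarith
  then show ?thesis
    by cases (use assms in \<open>auto simp: slot_coeff_def of_nat_diff\<close>)
qed

lemma slot_coeff_sum:
  fixes ks :: "'a list" and P :: "'a \<Rightarrow> bool"
  assumes "length ks = d" and "3 \<le> d"
  defines "N \<equiv> length (filter P ks)"
  shows "(\<Sum>j<d. slot_coeff d a (P (ks ! j)) (length (filter P (take j ks @ drop (Suc j) ks)))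
            + (if j = 0 then first_slot_coeff d a (P (ks ! j))
                 (length (filter P (take j ks @ drop (Suc j) ks))) else 0))
         = (if P (ks ! 0) then a else 1) - ((if N = 0 then 1 else 0) + a * (if N = d then 1 else 0))"
proof -
  let ?rest = "\<lambda>j. length (filter P (take j ks @ drop (Suc j) ks))"
  have rest: "?rest j = (if P (ks ! j) then N - 1 else N)" if "j < d" for j
    using length_filter_remove_nth[of j ks P] that assms(1) unfolding N_def by auto
  have "(\<Sum>j<d. slot_coeff d a (P (ks ! j)) (?rest j))
      = (\<Sum>j<d. if P (ks ! j) then slot_coeff d a True (N - 1) else slot_coeff d a False N)"
    using rest by (intro sum.cong refl) auto
  also have "\<dots> = real N * slot_coeff d a True (N - 1) + real (d - N) * slot_coeff d a False N"
    using sum_nth_if_length_filter[of P ks "slot_coeff d a True (N - 1)" "slot_coeff d a False N"]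
    by (simp add: assms(1) N_def)
  also have "\<dots> = (if 0 < N \<and> N < d then 1 else 0) + (if N = 1 then a - 1 else 0)"
    using assms by (intro slot_coeff_balance) (auto simp: N_def)
  finally have slots: "(\<Sum>j<d. slot_coeff d a (P (ks ! j)) (?rest j))
      = (if 0 < N \<and> N < d then 1 else 0) + (if N = 1 then a - 1 else 0)" .
  have "?rest 0 \<le> d - 1"
    using assms(1) length_filter_le[of P "take 0 ks @ drop 1 ks"] by simp
  then have N_bounds: "if P (ks ! 0) then 1 \<le> N \<and> N \<le> d else N < d"
    using length_filter_remove_nth[of 0 ks P] assms unfolding N_def by auto
  have "(\<Sum>j<d. (if j = 0 then first_slot_coeff d a (P (ks ! j)) (?rest j) else 0))
      = first_slot_coeff d a (P (ks ! 0)) (?rest 0)"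
    using assms by simp
  then show ?thesis
    using slots N_bounds assms rest[of 0]
    by (auto simp: sum.distrib first_slot_coeff_def split: if_splits)
qed

lemma first_slot_tensor_in_tmod:
  assumes "3 \<le> d"
    and W: "\<forall>j\<in>{1..d-2}. clone n (bin_monomial (d - 1) j) \<in> tspan I (d - 1) W"
  shows "(\<lambda>ks. if ks ! 0 \<notin> {1..n} then a else 1)
           \<in> tmod I d (clone n (\<lambda>ks. bin_monomial d 0 ks + a * bin_monomial d d ks)) W"
proof -
  define M :: "nat \<Rightarrow> nat \<Rightarrow> tensor" where "M j k rest = slot_coeff d a (k \<notin> {1..n}) (ydeg n rest)
      + (if j = 0 then first_slot_coeff d a (k \<notin> {1..n}) (ydeg n rest) else 0)" for j k rest
  have W': "\<forall>j\<in>{1..d - 1 - 1}. clone n (bin_monomial (d - 1) j) \<in> tspan I (d - 1) W"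
    using W by (metis diff_diff_left one_add_one)
  have "M j k \<in> tspan I (d - 1) W" for j k
    unfolding M_def
    by (rule ydeg_function_in_tspan[OF W'])
      (use \<open>3 \<le> d\<close> in \<open>auto simp: slot_coeff_def first_slot_coeff_def\<close>)
  moreover have "(if ks ! 0 \<notin> {1..n} then a else 1)
      = clone n (\<lambda>ks. bin_monomial d 0 ks + a * bin_monomial d d ks) ks
        + (\<Sum>j<d. M j (ks ! j) (take j ks @ drop (Suc j) ks))" if "ks \<in> tdom I d" for ks
    using slot_coeff_sum[where P = "\<lambda>k. k \<notin> {1..n}" and ks = ks and a = a] that \<open>3 \<le> d\<close>
    unfolding M_def clone_binary_form ydeg_def tdom_def by force
  ultimately show ?thesis
    unfolding tmod_def by blast
qed

lemma minrk_clone_le_1: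
  assumes "3 \<le> d"
    and "\<forall>j\<in>{1..d-2}. clone n (bin_monomial (d - 1) j) \<in> tspan I (d - 1) W"
  shows "minrk I d (tmod I d (clone n (\<lambda>ks. bin_monomial d 0 ks + a * bin_monomial d d ks)) W) \<le> 1"
  by (rule minrk_le[OF first_slot_tensor_in_tmod[OF assms]])
    (use rank_le_first_slot[of d I "\<lambda>k. if k \<notin> {1..n} then a else 1"] \<open>3 \<le> d\<close> in simp)

lemma srank_ge_2_if_sign_change:
  fixes a :: real
  assumes "even d" and "0 < d" and "a < 0"
    and "E \<subseteq> I" and "F \<subseteq> I" and "e \<in> E" and "f \<in> F"
    and C_E: "\<forall>ks\<in>tdom E d. C ks = 1" and C_F: "\<forall>ks\<in>tdom F d. C ks = a"
    and only_E: "only_decomposable E d ones (tmod E d ones W)"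
    and only_F: "only_decomposable F d ones (tmod F d ones W)"
    and T: "T \<in> tmod I d C W" and "srank_le I d T r"
  shows "2 \<le> r"
proof (rule ccontr)
  assume "\<not> 2 \<le> r"
  then obtain c u where T_eq: "\<forall>ks\<in>tdom I d. T ks = c * (\<Prod>i<d. u (ks ! i))"
    using srank_le_1_imp_scaled_power[OF \<open>srank_le I d T r\<close>] by fastforce
  have dom: "tdom E d \<subseteq> tdom I d" "tdom F d \<subseteq> tdom I d"
    using \<open>E \<subseteq> I\<close> \<open>F \<subseteq> I\<close> by (auto simp: tdom_def)
  have rep: "replicate d e \<in> tdom E d" "replicate d f \<in> tdom F d"
    using \<open>e \<in> E\<close> \<open>f \<in> F\<close> by (auto simp: tdom_def)
  have "T \<in> tmod E d ones W"
    using tmod_restrict[OF T \<open>E \<subseteq> I\<close>] C_E by (simp add: ones_def)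
  moreover have "decomposable E d T"
    using dom T_eq by (intro decomposable_if_scaled_power[OF \<open>0 < d\<close>]) auto
  ultimately have "T (replicate d e) = 1"
    using only_E rep unfolding only_decomposable_def ones_def by blast
  then have pos: "0 < c * u e ^ d"
    using T_eq rep dom by auto
  have "(\<lambda>ks. T ks / a) \<in> tmod F d ones W"
    using tmod_restrict[OF tmod_divide[OF T] \<open>F \<subseteq> I\<close>] C_F \<open>a < 0\<close> by (simp add: ones_def)
  moreover have "decomposable F d (\<lambda>ks. T ks / a)"
    using dom T_eq by (intro decomposable_if_scaled_power[OF \<open>0 < d\<close>, of _ _ "c / a"]) auto
  ultimately have "T (replicate d f) / a = 1"
    using only_F rep unfolding only_decomposable_def ones_def by blast
  then have "c * u f ^ d = a"
    using T_eq rep dom \<open>a < 0\<close> by auto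
  with even_power_sign[OF \<open>even d\<close> pos, of "u f"] \<open>a < 0\<close> show False by simp
qed

lemma symmetric_tensor_length_filter: "symmetric_tensor I d (\<lambda>ks. \<phi> (length (filter P ks)))"
  unfolding symmetric_tensor_def by (metis mset_filter size_mset)

lemma srank_le_2_binary_form:
  "srank_le I d (\<lambda>ks. (if length (filter P ks) = 0 then 1 else 0)
                     + a * (if length (filter P ks) = d then 1 else 0)) 2"
  unfolding srank_le_def
proof (intro exI[of _ "\<lambda>l. if l = 0 then 1 else a"]
    exI[of _ "\<lambda>l k. if l = 0 then (if \<not> P k then 1 else 0) else (if P k then 1 else 0)"] ballI)
  fix ks assume "ks \<in> tdom I d"
  then have len: "length ks = d" by (simp add: tdom_def)
  have "length (filter (\<lambda>k. \<not> P k) ks) = d \<longleftrightarrow> length (filter P ks) = 0"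
    using sum_length_filter_compl[of P ks] len by linarith
  then have x_part: "(\<Prod>i<d. if \<not> P (ks ! i) then 1 else 0)
      = (if length (filter P ks) = 0 then 1 else 0 :: real)"
    using prod_nth_indicator[of "\<lambda>k. \<not> P k" ks] len by simp
  have y_part: "(\<Prod>i<d. if P (ks ! i) then 1 else 0)
      = (if length (filter P ks) = d then 1 else 0 :: real)"
    using prod_nth_indicator[of P ks] len by simp
  show "(if length (filter P ks) = 0 then 1 else 0) + a * (if length (filter P ks) = d then 1 else 0)
      = (\<Sum>l<2::nat. (if l = 0 then 1 else a) * (\<Prod>i<d.
           if l = 0 then (if \<not> P (ks ! i) then 1 else 0) else (if P (ks ! i) then 1 else 0)))"
    using x_part y_part by (simp add: numeral_2_eq_2)
qed

lemma minsrk_clone_ge_2: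
  fixes a :: real
  assumes "even d" and "0 < d" and "a < 0" and "1 \<le> n"
    and "only_decomposable {1..n} d ones (tmod {1..n} d ones W)"
    and "only_decomposable {n+1..2*n} d ones (tmod {n+1..2*n} d ones W)"
  defines "I \<equiv> {1..n} \<union> {n+1..2*n}"
    and "C \<equiv> clone n (\<lambda>ks. bin_monomial d 0 ks + a * bin_monomial d d ks)"
  shows "2 \<le> minsrk I d (tmod I d C W)"
proof (rule le_minsrk)
  show "C \<in> tmod I d C W" by (rule tmod_self)
  show "symmetric_tensor I d C"
    unfolding C_def clone_binary_form ydeg_def by (rule symmetric_tensor_length_filter)
  show "srank_le I d C 2"
    unfolding C_def clone_binary_form ydeg_def by (rule srank_le_2_binary_form)
next
  fix T r assume "T \<in> tmod I d C W" and "srank_le I d T r"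
  then show "2 \<le> r"
    using assms(1-6) clone_binary_form_inner[of d _ n a]
      clone_binary_form_outer[of d _ "{n+1..2*n}" n a]
    by (intro srank_ge_2_if_sign_change[where e = 1 and f = "n + 1" and E = "{1..n}"
          and F = "{n+1..2*n}"]) (auto simp: I_def C_def)
qed

theorem proposition4p5:
  fixes d n :: nat and W :: "tensor set"
  defines "E \<equiv> {1..n}" and "\<E> \<equiv> {n+1..2*n}"
  defines "C \<equiv> (\<lambda>ks. bin_monomial d 0 ks - 3 * bin_monomial d d ks)"
  assumes "even d" and "d \<ge> 4" and "n \<ge> 1"
    and "finite W"
    and h3: "\<forall>j\<in>{1..d-2}. clone n (bin_monomial (d-1) j) \<in> tspan (E \<union> \<E>) (d-1) W"
    and h4e: "only_decomposable E d ones (tmod E d ones W)"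
    and h4eps: "only_decomposable \<E> d ones (tmod \<E> d ones W)"
  shows "minrk (E \<union> \<E>) d (tmod (E \<union> \<E>) d (clone n C) W)
       < minsrk (E \<union> \<E>) d (tmod (E \<union> \<E>) d (clone n C) W)"
proof -
  have C_eq: "C = (\<lambda>ks. bin_monomial d 0 ks + (-3) * bin_monomial d d ks)"
    unfolding C_def by simp
  have "minrk (E \<union> \<E>) d (tmod (E \<union> \<E>) d (clone n C) W) \<le> 1"
    unfolding C_eq using h3 \<open>d \<ge> 4\<close> by (intro minrk_clone_le_1) auto
  moreover have "2 \<le> minsrk (E \<union> \<E>) d (tmod (E \<union> \<E>) d (clone n C) W)"
    using h4e h4eps \<open>even d\<close> \<open>d \<ge> 4\<close> \<open>n \<ge> 1\<close>
    unfolding C_eq E_def \<E>_def by (intro minsrk_clone_ge_2) auto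
  ultimately show ?thesis by simp
qed

end
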